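(* Let $G=(K\cup I,E)$ be a split graph and let $(V,\mathcal{F})$ be the split graph vertex shelling antimatroid defined on $G$. Then a subset $F\subseteq V$ is feasible (i.e. $F\in\mathcal{F}$) if and only if $N(F)$ induces a clique in $G$.
   Context: A split graph $G=(K\cup I,E)$ is a finite simple graph whose vertex set $V=K\cup I$ comes with a fixed partition into a clique $K$ and an independent set $I$ (either may be empty). We write $u\sim v$ if $u,v$ are adjacent. For $F\subseteq V$, $N(F)$ denotes the set of vertices $w\in V\setminus F$ adjacent to at least one vertex of $F$, and $N(v)=N(\{v\})$. A vertex is simplicial in a graph if its neighbours induce a clique. The split graph vertex shelling antimatroid of $G$ is the set system $(V,\mathcal{F})$ in which $F\subseteq V$ is feasible iff there is an ordering $f_1,\dots,f_{|F|}$ of $F$ such that for every $j$, $f_j$ is simplicial in the graph obtained from $G$ by deleting $f_1,\dots,f_{j-1}$ (the empty set is feasible). The empty vertex set counts as a clique. *)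

theory Defs
  imports Main
begin

definition simple_graph :: "'a set \<Rightarrow> ('a \<Rightarrow> 'a \<Rightarrow> bool) \<Rightarrow> bool" where
  "simple_graph V adj \<longleftrightarrow> finite V \<and>
     (\<forall>u v. adj u v \<longrightarrow> u \<in> V \<and> v \<in> V) \<and>
     (\<forall>u v. adj u v \<longrightarrow> adj v u) \<and> (\<forall>v. \<not> adj v v)"

definition is_clique :: "('a \<Rightarrow> 'a \<Rightarrow> bool) \<Rightarrow> 'a set \<Rightarrow> bool" where
  "is_clique adj C \<longleftrightarrow> (\<forall>u\<in>C. \<forall>v\<in>C. u \<noteq> v \<longrightarrow> adj u v)"

definition is_independent :: "('a \<Rightarrow> 'a \<Rightarrow> bool) \<Rightarrow> 'a set \<Rightarrow> bool" where
  "is_independent adj S \<longleftrightarrow> (\<forall>u\<in>S. \<forall>v\<in>S. \<not> adj u v)"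

definition split_graph :: "'a set \<Rightarrow> 'a set \<Rightarrow> ('a \<Rightarrow> 'a \<Rightarrow> bool) \<Rightarrow> bool" where
  "split_graph K I adj \<longleftrightarrow> simple_graph (K \<union> I) adj \<and> K \<inter> I = {} \<and>
     is_clique adj K \<and> is_independent adj I"

definition nbhd :: "'a set \<Rightarrow> ('a \<Rightarrow> 'a \<Rightarrow> bool) \<Rightarrow> 'a set \<Rightarrow> 'a set" where
  "nbhd V adj F = {w \<in> V - F. \<exists>f\<in>F. adj f w}"

definition simplicial_in :: "'a set \<Rightarrow> ('a \<Rightarrow> 'a \<Rightarrow> bool) \<Rightarrow> 'a \<Rightarrow> bool" where
  "simplicial_in W adj v \<longleftrightarrow> v \<in> W \<and> is_clique adj {u \<in> W. adj v u}"

definition shelling_feasible :: "'a set \<Rightarrow> ('a \<Rightarrow> 'a \<Rightarrow> bool) \<Rightarrow> 'a set \<Rightarrow> bool" where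
  "shelling_feasible V adj F \<longleftrightarrow> (\<exists>fs. distinct fs \<and> set fs = F \<and>
     (\<forall>j < length fs. simplicial_in (V - set (take j fs)) adj (fs ! j)))"

end

theory Submission
  imports Defs
begin

text \<open>Feasible sets are exactly those obtained from the empty set by repeatedly adding a
  vertex that is simplicial once the current set is deleted. In a split graph, adding such a
  vertex keeps the neighbourhood a clique; conversely, if N(F) is a clique then some vertex
  of F can be removed keeping N(F) a clique, and any vertex of F is simplicial in the graph
  with the rest of F deleted, since its remaining neighbours lie in N(F).\<close>

lemma shelling_condition_snoc:
  "(\<forall>j < length (fs @ [v]). simplicial_in (V - set (take j (fs @ [v]))) adj ((fs @ [v]) ! j))
   \<longleftrightarrow> (\<forall>j < length fs. simplicial_in (V - set (take j fs)) adj (fs ! j))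
       \<and> simplicial_in (V - set fs) adj v"
  by (auto simp: nth_append less_Suc_eq)

lemma shelling_feasible_empty: "shelling_feasible V adj {}"
  unfolding shelling_feasible_def by auto

lemma shelling_feasible_insert:
  assumes "shelling_feasible V adj F" "v \<notin> F" "simplicial_in (V - F) adj v"
  shows "shelling_feasible V adj (insert v F)"
proof -
  obtain fs where "distinct fs" "set fs = F"
    and "\<forall>j < length fs. simplicial_in (V - set (take j fs)) adj (fs ! j)"
    using assms(1) unfolding shelling_feasible_def by blast
  then show ?thesis
    using assms(2,3) shelling_condition_snoc[of fs v V adj]
    unfolding shelling_feasible_def by (intro exI[of _ "fs @ [v]"]) auto
qed

lemma shelling_feasible_induct [consumes 1, case_names empty insert]:
  assumes "shelling_feasible V adj F"
    and "P {}"
    and "\<And>F v. shelling_feasible V adj F \<Longrightarrow> P F \<Longrightarrow> v \<notin> F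
           \<Longrightarrow> simplicial_in (V - F) adj v \<Longrightarrow> P (insert v F)"
  shows "P F"
proof -
  obtain fs where "distinct fs" "set fs = F"
    and "\<forall>j < length fs. simplicial_in (V - set (take j fs)) adj (fs ! j)"
    using assms(1) unfolding shelling_feasible_def by blast
  then show ?thesis
  proof (induction fs arbitrary: F rule: rev_induct)
    case Nil
    then show ?case using assms(2) by simp
  next
    case (snoc v fs)
    have prefix: "\<forall>j < length fs. simplicial_in (V - set (take j fs)) adj (fs ! j)"
      and last: "simplicial_in (V - set fs) adj v"
      using snoc.prems(3) unfolding shelling_condition_snoc by blast+
    have "shelling_feasible V adj (set fs)"
      using snoc.prems(1) prefix unfolding shelling_feasible_def by auto
    then show ?case
      using snoc.IH[of "set fs"] snoc.prems(1,2) prefix last assms(3)[of "set fs" v] by auto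
  qed
qed

lemma is_clique_subset: "is_clique adj C \<Longrightarrow> D \<subseteq> C \<Longrightarrow> is_clique adj D"
  unfolding is_clique_def by blast

lemma is_clique_insert:
  assumes "is_clique adj C" "\<And>w. w \<in> C \<Longrightarrow> w \<noteq> v \<Longrightarrow> adj v w \<and> adj w v"
  shows "is_clique adj (insert v C)"
  using assms unfolding is_clique_def by blast

lemma nbhd_remove_subset: "nbhd V adj (F - {v}) \<subseteq> insert v (nbhd V adj F)"
  unfolding nbhd_def by blast

lemma simplicial_in_remove_rest:
  assumes "simple_graph V adj" "is_clique adj (nbhd V adj F)" "v \<in> F" "F \<subseteq> V"
  shows "simplicial_in (V - (F - {v})) adj v"
proof -
  have "{u \<in> V - (F - {v}). adj v u} \<subseteq> nbhd V adj F"
    using assms(1,3) unfolding simple_graph_def nbhd_def by blast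
  then show ?thesis
    using assms is_clique_subset unfolding simplicial_in_def by blast
qed

context
  fixes K I :: "'a set" and adj :: "'a \<Rightarrow> 'a \<Rightarrow> bool"
  assumes split: "split_graph K I adj"
begin

lemma split_adj_sym: "adj u v \<Longrightarrow> adj v u"
  and split_adj_in: "adj u v \<Longrightarrow> u \<in> K \<union> I \<and> v \<in> K \<union> I"
  and split_K_clique: "is_clique adj K"
  and split_disjoint: "K \<inter> I = {}"
  and split_simple: "simple_graph (K \<union> I) adj"
  using split unfolding split_graph_def simple_graph_def by auto

lemma split_K_adj: "u \<in> K \<Longrightarrow> v \<in> K \<Longrightarrow> u \<noteq> v \<Longrightarrow> adj u v"
  using split_K_clique unfolding is_clique_def by blast

lemma split_adj_I_imp_K: "adj u v \<Longrightarrow> u \<in> I \<Longrightarrow> v \<in> K"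
  using split split_adj_in unfolding split_graph_def is_independent_def by blast

lemma nbhd_clique_insert_simplicial:
  assumes clique: "is_clique adj (nbhd (K \<union> I) adj F)"
    and "v \<notin> F" and simp_v: "simplicial_in (K \<union> I - F) adj v"
  shows "is_clique adj (nbhd (K \<union> I) adj (insert v F))"
  unfolding is_clique_def
proof (intro ballI impI)
  let ?N = "nbhd (K \<union> I) adj F"
  let ?S = "{u \<in> K \<union> I - F. adj v u}"
  have S_clique: "is_clique adj ?S" using simp_v unfolding simplicial_in_def by blast
  have cover: "nbhd (K \<union> I) adj (insert v F) \<subseteq> ?N \<union> ?S"
    unfolding nbhd_def by blast
  have cross: "adj x y" if x: "x \<in> ?N" "x \<notin> ?S" and y: "y \<in> ?S" "y \<notin> ?N" and "x \<noteq> v" for x y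
  proof -
    have "x \<in> K \<union> I - F" using x(1) unfolding nbhd_def by blast
    then have not_vx: "\<not> adj v x" using x(2) by blast
    obtain f where f: "f \<in> F" "adj f x" using x(1) unfolding nbhd_def by blast
    have y_in: "y \<in> K \<union> I - F" "adj v y" using y(1) by auto
    \<comment> \<open>a vertex of \<open>I\<close> in \<open>N(F)\<close> has its \<open>F\<close>-neighbour in \<open>K\<close>, which then sees all of \<open>K - F\<close>\<close>
    have K_outside_F_in_N: "z \<in> ?N" if "x \<in> I" "z \<in> K" "z \<notin> F" for z
    proof -
      have "f \<in> K" using split_adj_I_imp_K split_adj_sym f(2) \<open>x \<in> I\<close> by blast
      then have "adj f z" using split_K_adj that f(1) by blast
      then show ?thesis using that f(1) unfolding nbhd_def by blast
    qed
    have "v \<notin> ?N"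
    proof
      assume "v \<in> ?N"
      then have "adj v x" using clique x(1) \<open>x \<noteq> v\<close> unfolding is_clique_def by metis
      then show False using not_vx by contradiction
    qed
    show "adj x y"
    proof (cases "y \<in> K")
      case True
      then show ?thesis
        using K_outside_F_in_N[of y] x(1) y y_in split_K_adj[of x y] \<open>x \<in> K \<union> I - F\<close> by blast
    next
      case False
      then have "v \<in> K" using y_in split_adj_I_imp_K split_adj_sym by blast
      then show ?thesis
        using K_outside_F_in_N[of v] \<open>v \<notin> ?N\<close> \<open>v \<notin> F\<close> split_K_adj[of v x] not_vx
          \<open>x \<noteq> v\<close> \<open>x \<in> K \<union> I - F\<close> by blast
    qed
  qed
  fix x y
  assume x: "x \<in> nbhd (K \<union> I) adj (insert v F)" and y: "y \<in> nbhd (K \<union> I) adj (insert v F)"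
    and "x \<noteq> y"
  have "x \<noteq> v" "y \<noteq> v" using x y unfolding nbhd_def by auto
  consider "x \<in> ?N" "y \<in> ?N" | "x \<in> ?S" "y \<in> ?S" | "x \<in> ?N" "x \<notin> ?S" "y \<in> ?S" "y \<notin> ?N"
    | "y \<in> ?N" "y \<notin> ?S" "x \<in> ?S" "x \<notin> ?N"
    using cover x y by blast
  then show "adj x y"
  proof cases
    case 1
    then show ?thesis using clique \<open>x \<noteq> y\<close> unfolding is_clique_def by blast
  next
    case 2
    then show ?thesis using S_clique \<open>x \<noteq> y\<close> unfolding is_clique_def by blast
  next
    case 3
    then show ?thesis using cross \<open>x \<noteq> v\<close> by blast
  next
    case 4
    then show ?thesis using cross[of y x] \<open>y \<noteq> v\<close> split_adj_sym by blast
  qed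
qed

lemma nbhd_clique_if_shelling_feasible:
  assumes "shelling_feasible (K \<union> I) adj F"
  shows "is_clique adj (nbhd (K \<union> I) adj F)"
  using assms
proof (induction rule: shelling_feasible_induct)
  case empty
  show ?case unfolding is_clique_def nbhd_def by simp
next
  case (insert F v)
  then show ?case using nbhd_clique_insert_simplicial by blast
qed

lemma nbhd_clique_removable_vertex:
  assumes clique: "is_clique adj (nbhd (K \<union> I) adj F)" and "F \<noteq> {}"
  shows "\<exists>v\<in>F. is_clique adj (nbhd (K \<union> I) adj (F - {v}))"
proof (cases "\<exists>v\<in>F \<inter> K. \<exists>x\<in>I - F. adj v x")
  case True
  then obtain v x where v: "v \<in> F \<inter> K" and x: "x \<in> I - F" "adj v x" by blast
  have x_N: "x \<in> nbhd (K \<union> I) adj F" using v x unfolding nbhd_def by blast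
  \<comment> \<open>\<open>N(F)\<close> is a clique, so \<open>x\<close> is its only vertex in \<open>I\<close>; hence \<open>v\<close> sees all of \<open>N(F)\<close>\<close>
  have v_adj: "adj v w \<and> adj w v" if "w \<in> nbhd (K \<union> I) adj F" "w \<noteq> v" for w
  proof (cases "w \<in> K")
    case True
    then show ?thesis using v that split_K_adj by blast
  next
    case False
    then have "w \<in> I" using that split_adj_in unfolding nbhd_def by blast
    then have "w = x"
      using clique that x_N x(1) split_adj_I_imp_K split_disjoint unfolding is_clique_def by blast
    then show ?thesis using x(2) split_adj_sym by blast
  qed
  have "is_clique adj (insert v (nbhd (K \<union> I) adj F))"
    by (rule is_clique_insert[OF clique v_adj])
  then have "is_clique adj (nbhd (K \<union> I) adj (F - {v}))"
    using nbhd_remove_subset by (rule is_clique_subset)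
  then show ?thesis using v by blast
next
  case False
  \<comment> \<open>no vertex of \<open>F \<inter> K\<close> sees \<open>I - F\<close>, so removing a vertex of \<open>K\<close> (if any) leaves \<open>N\<close> inside \<open>K\<close>\<close>
  obtain v where v: "v \<in> F" "F \<inter> K \<noteq> {} \<Longrightarrow> v \<in> K" using \<open>F \<noteq> {}\<close> by blast
  have "nbhd (K \<union> I) adj (F - {v}) \<subseteq> K"
  proof
    fix w assume w: "w \<in> nbhd (K \<union> I) adj (F - {v})"
    then obtain f where f: "f \<in> F - {v}" "adj f w" and "w \<in> K \<union> I" unfolding nbhd_def by blast
    show "w \<in> K"
    proof (rule ccontr)
      assume "w \<notin> K"
      then have "w \<in> I" "f \<in> K" using \<open>w \<in> K \<union> I\<close> f split_adj_I_imp_K split_adj_sym by blast+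
      then show False using False f v w split_disjoint unfolding nbhd_def by blast
    qed
  qed
  then show ?thesis using v is_clique_subset split_K_clique by blast
qed

lemma shelling_feasible_if_nbhd_clique:
  assumes "F \<subseteq> K \<union> I" "is_clique adj (nbhd (K \<union> I) adj F)"
  shows "shelling_feasible (K \<union> I) adj F"
proof -
  have "finite F"
    using assms(1) split_simple finite_subset unfolding simple_graph_def by blast
  then show ?thesis
    using assms
  proof (induction F rule: finite_psubset_induct)
    case (psubset F)
    show ?case
    proof (cases "F = {}")
      case True
      then show ?thesis using shelling_feasible_empty by simp
    next
      case False
      then obtain v where v: "v \<in> F" and clique': "is_clique adj (nbhd (K \<union> I) adj (F - {v}))"
        using nbhd_clique_removable_vertex psubset.prems(2) by blast
      have "shelling_feasible (K \<union> I) adj (F - {v})"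
        using psubset.IH[of "F - {v}"] v clique' psubset.prems(1) by blast
      moreover have "simplicial_in (K \<union> I - (F - {v})) adj v"
        using simplicial_in_remove_rest[OF split_simple psubset.prems(2) v psubset.prems(1)] .
      ultimately show ?thesis
        using shelling_feasible_insert[of "K \<union> I" adj "F - {v}" v] insert_absorb[OF v] by simp
    qed
  qed
qed

end

theorem mainTheorem1:
  fixes K I :: "'a set" and adj :: "'a \<Rightarrow> 'a \<Rightarrow> bool" and F :: "'a set"
  assumes "split_graph K I adj"
    and "F \<subseteq> K \<union> I"
  shows "shelling_feasible (K \<union> I) adj F \<longleftrightarrow> is_clique adj (nbhd (K \<union> I) adj F)"
  using nbhd_clique_if_shelling_feasible[OF assms(1)]
    shelling_feasible_if_nbhd_clique[OF assms] by blast

end
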